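(* For every $d\ge1$ and every $1\le i\le d$, $H_{i,d}>0$.
   Context: For integers $i,d\ge -1$ define $f_{-1,-1}=1$, $f_{-1,d}=0$ for $d\ge0$, $f_{i,-1}=0$ for $i\ge0$, and $f_{i,d}=(i+1)!\,S(d+1,i+1)$ for $i,d\ge0$, where $S(\cdot,\cdot)$ is the Stirling number of the second kind. For $d\ge0$ define rational numbers $F_{i,d}$, $-1\le i\le d$, by $F_{d,d}=1$ and recursively for $-1\le i\le d-1$, $F_{i,d}=\frac{1}{(d+1)!-(i+1)!}\sum_{j=i+1}^{d}f_{i,j}F_{j,d}$. Let $F_d(z)=\sum_{i=-1}^dF_{i,d}z^{d-i}$, and define the $H$-polynomial $H_d(z)=F_d(z-1)=\sum_{i=0}^{d+1}H_{i,d}z^{d+1-i}$, which defines the numbers $H_{i,d}$. *)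

theory Defs
  imports "HOL-Combinatorics.Stirling" "HOL-Computational_Algebra.Polynomial"
begin

definition fnum :: "int \<Rightarrow> int \<Rightarrow> rat" where
  "fnum i d =
     (if i = -1 \<and> d = -1 then 1
      else if i = -1 \<or> d = -1 then 0
      else of_nat (fact (nat (i + 1)) * Stirling (nat (d + 1)) (nat (i + 1))))"

function Fnum :: "int \<Rightarrow> int \<Rightarrow> rat" where
  "Fnum i d =
     (if i < -1 \<or> i > d then 0
      else if i = d then 1
      else (1 / (of_nat (fact (nat (d + 1))) - of_nat (fact (nat (i + 1)))))
             * (\<Sum>j\<in>{i+1..d}. fnum i j * Fnum j d))"
  by auto
termination
  by (relation "measure (\<lambda>(i, d). nat (d - i))") auto

definition Fpoly :: "int \<Rightarrow> rat poly" where
  "Fpoly d = (\<Sum>i\<in>{-1..d}. monom (Fnum i d) (nat (d - i)))"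

definition Hpoly :: "int \<Rightarrow> rat poly" where
  "Hpoly d = pcompose (Fpoly d) [:-1, 1:]"

definition Hnum :: "int \<Rightarrow> int \<Rightarrow> rat" where
  "Hnum i d = coeff (Hpoly d) (nat (d + 1 - i))"

end

theory Submission
  imports Defs "HOL-Computational_Algebra.Polynomial_FPS"
begin

text \<open>Write \<open>n = d + 1\<close>, \<open>F\<^sub>a = F\<^sub>a\<^sub>-\<^sub>1\<^sub>,\<^sub>d\<close> and \<open>H\<^sub>t = H\<^sub>t\<^sub>,\<^sub>d\<close> for \<open>0 \<le> a, t \<le> n\<close>.
  The recursion says that \<open>(F\<^sub>a)\<close> is an eigenvector, for the eigenvalue \<open>n!\<close>, of the
  triangular matrix \<open>(a! S(b,a))\<close>; since \<open>k\<^sup>b = \<Sum>\<^sub>a a! S(b,a) C(k,a)\<close>, this means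
  \<open>G(k) = \<Sum>\<^sub>b F\<^sub>b k\<^sup>b = n! \<Sum>\<^sub>a F\<^sub>a C(k,a)\<close>. Hence \<open>(1 - x)\<^sup>n\<^sup>+\<^sup>1 \<Sum>\<^sub>k G(k) x\<^sup>k\<close> equals
  \<open>n! \<Sum>\<^sub>a F\<^sub>a x\<^sup>a (1 - x)\<^sup>n\<^sup>-\<^sup>a = n! \<Sum>\<^sub>t H\<^sub>t x\<^sup>t\<close>, the last step being \<open>H(z) = F(z - 1)\<close> in
  homogeneous form. On the other hand \<open>G(k) = \<Sum>\<^sub>j H\<^sub>j k\<^sup>j (k + 1)\<^sup>n\<^sup>-\<^sup>j\<close>, and multiplying
  \<open>\<Sum>\<^sub>k k\<^sup>j (k + 1)\<^sup>r x\<^sup>k\<close> by \<open>(1 - x)\<^sup>r\<^sup>+\<^sup>j\<^sup>+\<^sup>1\<close> gives a polynomial with nonnegative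
  Eulerian-type coefficients \<open>B(r,j,t)\<close> summing to \<open>(r + j)!\<close>. So \<open>n! H\<^sub>t = \<Sum>\<^sub>j H\<^sub>j B(n-j,j,t)\<close>:
  \<open>H\<close> is an eigenvector for the eigenvalue \<open>n!\<close> of a nonnegative matrix with column sums \<open>n!\<close>
  and positive entries for \<open>0 < t, j < n\<close>. As \<open>H\<^sub>0 = H\<^sub>n = 0\<close> and \<open>\<Sum>\<^sub>t H\<^sub>t = 1\<close>, a
  Perron--Frobenius argument on the inner block forces \<open>H\<^sub>t > 0\<close> for \<open>0 < t < n\<close>.\<close>

unbundle fps_syntax

declare Fnum.simps [simp del]

lemma nat_int_plus_1 [simp]: "nat (int n + 1) = Suc n"
  by simp

definition Fcoeff :: "nat \<Rightarrow> nat \<Rightarrow> rat" where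
  "Fcoeff N a = Fnum (int a - 1) (int N)"

definition Hcoeff :: "nat \<Rightarrow> nat \<Rightarrow> rat" where
  "Hcoeff N t = (if t \<le> Suc N then Hnum (int t) (int N) else 0)"

lemma fnum_of_nat: "fnum (int a - 1) (int b - 1) = of_nat (fact a * Stirling b a)"
  unfolding fnum_def by (cases a; cases b) (auto simp: nat_diff_distrib)

lemma Fcoeff_Suc_self [simp]: "Fcoeff N (Suc N) = 1"
  unfolding Fcoeff_def by (subst Fnum.simps) simp

lemma Fcoeff_recursion:
  assumes "a \<le> N"
  shows "Fcoeff N a = (\<Sum>b\<in>{Suc a..Suc N}. of_nat (fact a * Stirling b a) * Fcoeff N b)
                        / (fact (Suc N) - fact a)"
proof -
  have reindex: "(\<Sum>j\<in>{int a..int N}. g j) = (\<Sum>b\<in>{Suc a..Suc N}. g (int b - 1))"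
    for g :: "int \<Rightarrow> rat"
    by (rule sum.reindex_bij_witness[of _ "\<lambda>b. int b - 1" "\<lambda>j. nat (j + 1)"]) auto
  show ?thesis
    unfolding Fcoeff_def using assms
    by (subst Fnum.simps) (simp add: reindex fnum_of_nat del: fact_Suc)
qed

lemma fact_mult_Fcoeff:
  assumes "1 \<le> N" "a \<le> Suc N"
  shows "fact (Suc N) * Fcoeff N a = (\<Sum>b\<in>{a..Suc N}. of_nat (fact a * Stirling b a) * Fcoeff N b)"
proof (cases "a = Suc N")
  case True
  then show ?thesis by (simp add: algebra_simps)
next
  case False
  with assms have "a \<le> N" by simp
  have "fact a \<le> (fact N :: nat)" using \<open>a \<le> N\<close> by (rule fact_mono)
  moreover have "fact N < (fact (Suc N) :: nat)" using assms by simp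
  ultimately have "(fact a :: rat) < fact (Suc N)"
    by (metis of_nat_fact of_nat_less_iff le_less_trans)
  with Fcoeff_recursion[OF \<open>a \<le> N\<close>]
  have "fact (Suc N) * Fcoeff N a
        = fact a * Fcoeff N a + (\<Sum>b\<in>{Suc a..Suc N}. of_nat (fact a * Stirling b a) * Fcoeff N b)"
    by (simp add: field_simps del: fact_Suc)
  also have "\<dots> = (\<Sum>b\<in>{a..Suc N}. of_nat (fact a * Stirling b a) * Fcoeff N b)"
    using assms by (subst sum.atLeast_Suc_atMost) simp_all
  finally show ?thesis .
qed

lemma poly_Fpoly: "poly (Fpoly (int N)) z = (\<Sum>a\<le>Suc N. Fcoeff N a * z ^ (Suc N - a))"
proof -
  have "poly (Fpoly (int N)) z = (\<Sum>a\<le>Suc N. Fnum (int a - 1) (int N) * z ^ nat (int N - (int a - 1)))"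
    unfolding Fpoly_def poly_sum poly_monom
    by (rule sum.reindex_bij_witness[of _ "\<lambda>a. int a - 1" "\<lambda>i. nat (i + 1)"]) auto
  also have "\<dots> = (\<Sum>a\<le>Suc N. Fcoeff N a * z ^ (Suc N - a))"
  proof (intro sum.cong refl)
    fix a assume "a \<in> {..Suc N}"
    then have "nat (int N - (int a - 1)) = Suc N - a"
      by auto
    then show "Fnum (int a - 1) (int N) * z ^ nat (int N - (int a - 1)) = Fcoeff N a * z ^ (Suc N - a)"
      by (simp add: Fcoeff_def)
  qed
  finally show ?thesis .
qed

lemma degree_Hpoly: "degree (Hpoly (int N)) \<le> Suc N"
proof -
  have "degree (Fpoly (int N)) \<le> Suc N"
    unfolding Fpoly_def by (rule degree_sum_le) (auto intro: order.trans[OF degree_monom_le])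
  then show ?thesis
    unfolding Hpoly_def using degree_pcompose_le[of "Fpoly (int N)" "[:-1, 1:]"] by simp
qed

lemma poly_Hpoly: "poly (Hpoly (int N)) z = (\<Sum>t\<le>Suc N. Hcoeff N t * z ^ (Suc N - t))"
proof -
  have "poly (Hpoly (int N)) z = (\<Sum>i\<le>Suc N. coeff (Hpoly (int N)) i * z ^ i)"
    by (subst poly_as_sum_of_monoms'[OF degree_Hpoly, symmetric]) (simp add: poly_sum poly_monom)
  also have "\<dots> = (\<Sum>t\<le>Suc N. coeff (Hpoly (int N)) (Suc N - t) * z ^ (Suc N - t))"
    by (rule sum.reindex_bij_witness[of _ "\<lambda>t. Suc N - t" "\<lambda>i. Suc N - i"]) auto
  also have "\<dots> = (\<Sum>t\<le>Suc N. Hcoeff N t * z ^ (Suc N - t))"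
    by (intro sum.cong refl) (auto simp: Hcoeff_def Hnum_def nat_diff_distrib)
  finally show ?thesis .
qed

lemma poly_eqI_off_point:
  fixes p q :: "'a::{idom,ring_char_0} poly"
  assumes "\<And>x. x \<noteq> c \<Longrightarrow> poly p x = poly q x"
  shows "p = q"
proof (rule ccontr)
  assume "p \<noteq> q"
  then have "finite {x. poly (p - q) x = 0}"
    by (intro poly_roots_finite) simp
  moreover have "UNIV - {c} \<subseteq> {x. poly (p - q) x = 0}"
    using assms by auto
  ultimately have "finite (UNIV :: 'a set)"
    by (metis finite_Diff2 finite_subset finite.emptyI finite_insert)
  then show False
    by (simp add: infinite_UNIV_char_0)
qed

lemma Hcoeff_Fcoeff_homogeneous_nonzero:
  fixes x y :: rat
  assumes "x \<noteq> 0"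
  shows "(\<Sum>t\<le>Suc N. Hcoeff N t * x ^ t * y ^ (Suc N - t))
       = (\<Sum>a\<le>Suc N. Fcoeff N a * x ^ a * (y - x) ^ (Suc N - a))"
proof -
  let ?n = "Suc N"
  have scale: "x ^ ?n * (c * z ^ (?n - k)) = c * x ^ k * (x * z) ^ (?n - k)" if "k \<le> ?n" for c z k
  proof -
    have "x ^ ?n = x ^ k * x ^ (?n - k)"
      using that by (simp add: power_add[symmetric])
    then show ?thesis
      by (simp add: power_mult_distrib)
  qed
  have xy: "x * (y / x) = y" "x * (y / x - 1) = y - x"
    using assms by (simp_all add: field_simps)
  have scale_H: "c * x ^ k * y ^ (?n - k) = x ^ ?n * (c * (y / x) ^ (?n - k))" if "k \<le> ?n" for c k
    by (simp only: scale[OF that] xy)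
  have scale_F: "x ^ ?n * (c * (y / x - 1) ^ (?n - k)) = c * x ^ k * (y - x) ^ (?n - k)"
    if "k \<le> ?n" for c k
    by (simp only: scale[OF that] xy)
  have "poly (Hpoly (int N)) (y / x) = poly (Fpoly (int N)) (y / x - 1)"
    unfolding Hpoly_def poly_pcompose by simp
  then have eq: "x ^ ?n * (\<Sum>t\<le>?n. Hcoeff N t * (y / x) ^ (?n - t))
           = x ^ ?n * (\<Sum>a\<le>?n. Fcoeff N a * (y / x - 1) ^ (?n - a))"
    by (simp only: poly_Hpoly poly_Fpoly)
  have "(\<Sum>t\<le>?n. Hcoeff N t * x ^ t * y ^ (?n - t))
      = x ^ ?n * (\<Sum>t\<le>?n. Hcoeff N t * (y / x) ^ (?n - t))"
    unfolding sum_distrib_left by (rule sum.cong[OF refl], rule scale_H) simp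
  also have "\<dots> = x ^ ?n * (\<Sum>a\<le>?n. Fcoeff N a * (y / x - 1) ^ (?n - a))"
    by (fact eq)
  also have "\<dots> = (\<Sum>a\<le>?n. Fcoeff N a * x ^ a * (y - x) ^ (?n - a))"
    unfolding sum_distrib_left by (rule sum.cong[OF refl], rule scale_F) simp
  finally show ?thesis .
qed

text \<open>\<open>H(z) = F(z - 1)\<close> in homogeneous form.\<close>
lemma Hcoeff_Fcoeff_homogeneous:
  fixes x y :: rat
  shows "(\<Sum>t\<le>Suc N. Hcoeff N t * x ^ t * y ^ (Suc N - t))
       = (\<Sum>a\<le>Suc N. Fcoeff N a * x ^ a * (y - x) ^ (Suc N - a))"
proof -
  define p where "p = (\<Sum>t\<le>Suc N. monom (Hcoeff N t * y ^ (Suc N - t)) t)"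
  define q where "q = (\<Sum>a\<le>Suc N. smult (Fcoeff N a) (monom 1 a * [:y, -1:] ^ (Suc N - a)))"
  have "poly p x = (\<Sum>t\<le>Suc N. Hcoeff N t * x ^ t * y ^ (Suc N - t))"
       "poly q x = (\<Sum>a\<le>Suc N. Fcoeff N a * x ^ a * (y - x) ^ (Suc N - a))" for x
    unfolding p_def q_def by (simp_all add: poly_sum poly_monom mult_ac)
  moreover have "p = q"
    by (rule poly_eqI_off_point[of 0]) (simp only: calculation, erule Hcoeff_Fcoeff_homogeneous_nonzero)
  ultimately show ?thesis
    by metis
qed

section \<open>Powers in the binomial basis\<close>

lemma times_choose_eq: "k * (k choose a) = a * (k choose a) + Suc a * (k choose Suc a)"
  by (metis Suc_times_binomial_eq add.assoc add_left_imp_eq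
      add_mult_distrib2 binomial_Suc_Suc mult.commute mult_Suc)

lemma power_eq_sum_Stirling_choose: "k ^ b = (\<Sum>a\<le>b. fact a * Stirling b a * (k choose a))"
proof (induction b)
  case 0
  then show ?case by simp
next
  case (Suc b)
  define g where "g a = fact a * a * Stirling b a * (k choose a)" for a
  define h where "h a = fact (Suc a) * Stirling b a * (k choose Suc a)" for a
  have "k ^ Suc b = (\<Sum>a\<le>b. fact a * Stirling b a * (k * (k choose a)))"
    using Suc by (simp add: sum_distrib_left algebra_simps)
  also have "\<dots> = (\<Sum>a\<le>b. g a) + (\<Sum>a\<le>b. h a)"
    unfolding times_choose_eq g_def h_def sum.distrib[symmetric]
    by (intro sum.cong) (simp_all add: algebra_simps)
  also have "(\<Sum>a\<le>b. g a) = (\<Sum>a\<le>b. g (Suc a))"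
    using sum.atMost_Suc_shift[of g b] by (simp add: g_def)
  also have "(\<Sum>a\<le>b. g (Suc a)) + (\<Sum>a\<le>b. h a)
           = (\<Sum>a\<le>b. fact (Suc a) * Stirling (Suc b) (Suc a) * (k choose Suc a))"
    unfolding sum.distrib[symmetric] by (intro sum.cong) (simp_all add: g_def h_def algebra_simps)
  also have "\<dots> = (\<Sum>a\<le>Suc b. fact a * Stirling (Suc b) a * (k choose a))"
    by (simp only: sum.atMost_Suc_shift) simp
  finally show ?case .
qed

lemma sum_Fcoeff_power:
  assumes "1 \<le> N"
  shows "(\<Sum>b\<le>Suc N. Fcoeff N b * of_nat k ^ b)
       = fact (Suc N) * (\<Sum>a\<le>Suc N. Fcoeff N a * of_nat (k choose a))"
proof -
  let ?n = "Suc N"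
  let ?c = "\<lambda>b a. of_nat (fact a * Stirling b a) :: rat"
  have "(\<Sum>b\<le>?n. Fcoeff N b * of_nat k ^ b)
      = (\<Sum>b\<le>?n. \<Sum>a\<le>?n. Fcoeff N b * ?c b a * of_nat (k choose a))"
  proof (intro sum.cong refl)
    fix b assume "b \<in> {..?n}"
    have "(of_nat k ^ b :: rat) = (\<Sum>a\<le>b. ?c b a * of_nat (k choose a))"
      unfolding of_nat_power[symmetric] power_eq_sum_Stirling_choose by simp
    also have "\<dots> = (\<Sum>a\<le>?n. ?c b a * of_nat (k choose a))"
      using \<open>b \<in> {..?n}\<close> by (intro sum.mono_neutral_left) auto
    finally have "(of_nat k ^ b :: rat) = (\<Sum>a\<le>?n. ?c b a * of_nat (k choose a))" .
    then show "Fcoeff N b * of_nat k ^ b = (\<Sum>a\<le>?n. Fcoeff N b * ?c b a * of_nat (k choose a))"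
      by (simp only: sum_distrib_left mult.assoc)
  qed
  also have "\<dots> = (\<Sum>a\<le>?n. of_nat (k choose a) * (\<Sum>b\<le>?n. ?c b a * Fcoeff N b))"
    by (subst sum.swap) (simp add: sum_distrib_left algebra_simps)
  also have "\<dots> = (\<Sum>a\<le>?n. of_nat (k choose a) * (fact ?n * Fcoeff N a))"
  proof (intro sum.cong refl)
    fix a assume "a \<in> {..?n}"
    have "(\<Sum>b\<le>?n. ?c b a * Fcoeff N b) = (\<Sum>b\<in>{a..?n}. ?c b a * Fcoeff N b)"
      by (rule sum.mono_neutral_right) auto
    with \<open>a \<in> {..?n}\<close> fact_mult_Fcoeff[OF assms, of a]
    show "of_nat (k choose a) * (\<Sum>b\<le>?n. ?c b a * Fcoeff N b)
        = of_nat (k choose a) * (fact ?n * Fcoeff N a)"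
      by simp
  qed
  finally show ?thesis
    by (simp add: sum_distrib_left algebra_simps)
qed

lemma fps_mult_one_minus_X_nth:
  "(f * (1 - fps_X)) $ n = f $ n - (if n = 0 then 0 else f $ (n - 1))"
  for f :: "'a::comm_ring_1 fps"
  by (simp add: right_diff_distrib mult.commute[of f fps_X])

lemma fps_choose_mult_one_minus_X_power:
  "Abs_fps (\<lambda>k. of_nat (k choose a)) * (1 - fps_X) ^ (a + 1) = (fps_X ^ a :: 'a::comm_ring_1 fps)"
proof (induction a)
  case 0
  show ?case
    by (rule fps_ext) (simp add: fps_mult_one_minus_X_nth)
next
  case (Suc a)
  have step: "Abs_fps (\<lambda>k. of_nat (k choose Suc a)) * (1 - fps_X)
      = (fps_X * Abs_fps (\<lambda>k. of_nat (k choose a)) :: 'a fps)"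
  proof (rule fps_ext)
    fix k
    show "(Abs_fps (\<lambda>k. of_nat (k choose Suc a)) * (1 - fps_X)) $ k
        = (fps_X * Abs_fps (\<lambda>k. of_nat (k choose a)) :: 'a fps) $ k"
      unfolding fps_mult_one_minus_X_nth by (cases k) simp_all
  qed
  have "Abs_fps (\<lambda>k. of_nat (k choose Suc a)) * (1 - fps_X) ^ (Suc a + 1)
      = (Abs_fps (\<lambda>k. of_nat (k choose Suc a)) * (1 - fps_X)) * ((1 - fps_X) ^ (a + 1) :: 'a fps)"
    by (simp only: mult.assoc power_Suc[symmetric] add_Suc)
  also have "\<dots> = fps_X * fps_X ^ a"
    unfolding step using Suc by (simp only: mult.assoc)
  finally show ?case
    by simp
qed

lemma fps_deriv_one_minus_X_power:
  "fps_deriv ((1 - fps_X) ^ Suc m :: 'a::comm_ring_1 fps) = - (of_nat (Suc m) * (1 - fps_X) ^ m)"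
  by (subst fps_deriv_power') (simp del: power_Suc add: algebra_simps)

text \<open>Multiplying the \<open>k\<close>-th coefficient by \<open>k + 1\<close> is applying \<open>d/dx \<circ> x\<close>; the identity
  follows by differentiating \<open>x A (1 - x)\<^sup>m\<^sup>+\<^sup>1 = x P\<close>.\<close>
lemma fps_deriv_X_mult_mult_one_minus_X_power:
  fixes A P :: "'a::comm_ring_1 fps"
  assumes "A * (1 - fps_X) ^ (m + 1) = P"
  shows "fps_deriv (fps_X * A) * (1 - fps_X) ^ (m + 2)
       = (P + fps_X * fps_deriv P) * (1 - fps_X) + of_nat (m + 1) * fps_X * P"
proof -
  define Y :: "'a fps" where "Y = 1 - fps_X"
  define D where "D = fps_deriv (fps_X * A)"
  have "fps_deriv ((fps_X * A) * Y ^ Suc m) = fps_deriv (fps_X * P)"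
    using assms by (simp add: mult.assoc Y_def)
  moreover have "fps_deriv ((fps_X * A) * Y ^ Suc m)
      = (fps_X * A) * (- (of_nat (Suc m) * Y ^ m)) + D * Y ^ Suc m"
    unfolding D_def Y_def by (simp only: fps_deriv_mult fps_deriv_one_minus_X_power)
  moreover have "fps_deriv (fps_X * P) = fps_X * fps_deriv P + P"
    by (simp only: fps_deriv_mult fps_deriv_fps_X) simp
  ultimately have "D * Y ^ Suc m - of_nat (m + 1) * fps_X * A * Y ^ m = P + fps_X * fps_deriv P"
    by (simp add: algebra_simps)
  then have "(D * Y ^ Suc m - of_nat (m + 1) * fps_X * A * Y ^ m) * Y = (P + fps_X * fps_deriv P) * Y"
    by simp
  then have "D * Y ^ (m + 2) - of_nat (m + 1) * fps_X * (A * Y ^ (m + 1)) = (P + fps_X * fps_deriv P) * Y"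
    by (simp add: algebra_simps power_Suc2 del: power_Suc)
  then show ?thesis
    using assms unfolding D_def Y_def by (simp only: diff_eq_eq)
qed

lemma fps_Suc_weight_mult_one_minus_X_power:
  fixes A :: "'a::comm_ring_1 fps"
  assumes "A * (1 - fps_X) ^ (m + 1) = Abs_fps p"
  shows "Abs_fps (\<lambda>k. of_nat (k + 1) * A $ k) * (1 - fps_X) ^ (m + 2)
       = Abs_fps (\<lambda>t. of_nat (t + 1) * p t
                     + (if t = 0 then 0 else (of_nat m + 1 - of_nat t) * p (t - 1)))"
proof -
  have "Abs_fps (\<lambda>k. of_nat (k + 1) * A $ k) = fps_deriv (fps_X * A)"
    by (rule fps_ext) (simp add: algebra_simps)
  moreover have "((Abs_fps p + fps_X * fps_deriv (Abs_fps p)) * (1 - fps_X)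
                  + of_nat (m + 1) * fps_X * Abs_fps p) $ t
               = of_nat (t + 1) * p t + (if t = 0 then 0 else (of_nat m + 1 - of_nat t) * p (t - 1))"
    for t
  proof -
    have "(Abs_fps p + fps_X * fps_deriv (Abs_fps p)) $ t = of_nat (t + 1) * p t" for t
      by (cases t) (simp_all add: algebra_simps)
    moreover have "(of_nat (m + 1) * fps_X * Abs_fps p) $ t
                 = (if t = 0 then 0 else of_nat (m + 1) * p (t - 1))"
      by (simp add: mult.assoc fps_of_nat[symmetric])
    ultimately show ?thesis
      unfolding fps_add_nth fps_mult_one_minus_X_nth by (cases t) (simp_all add: algebra_simps)
  qed
  ultimately show ?thesis
    using fps_deriv_X_mult_mult_one_minus_X_power[OF assms] by (auto intro: fps_ext)
qed

lemma fps_weight_mult_one_minus_X_power: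
  fixes A :: "'a::comm_ring_1 fps"
  assumes "A * (1 - fps_X) ^ (m + 1) = Abs_fps p"
  shows "Abs_fps (\<lambda>k. of_nat k * A $ k) * (1 - fps_X) ^ (m + 2)
       = Abs_fps (\<lambda>t. of_nat t * p t
                     + (if t = 0 then 0 else (of_nat m + 2 - of_nat t) * p (t - 1)))"
proof -
  have "Abs_fps (\<lambda>k. of_nat k * A $ k) = Abs_fps (\<lambda>k. of_nat (k + 1) * A $ k) - A"
    by (rule fps_ext) (simp add: algebra_simps)
  moreover have "A * (1 - fps_X) ^ (m + 2) = Abs_fps p * (1 - fps_X)"
    using assms by (metis add_2_eq_Suc' mult.assoc power_Suc2 Suc_eq_plus1)
  ultimately have "Abs_fps (\<lambda>k. of_nat k * A $ k) * (1 - fps_X) ^ (m + 2)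
     = Abs_fps (\<lambda>k. of_nat (k + 1) * A $ k) * (1 - fps_X) ^ (m + 2) - Abs_fps p * (1 - fps_X)"
    by (simp only: left_diff_distrib)
  also have "\<dots> = Abs_fps (\<lambda>t. of_nat (t + 1) * p t
                     + (if t = 0 then 0 else (of_nat m + 1 - of_nat t) * p (t - 1)))
       - Abs_fps p * (1 - fps_X)"
    by (simp only: fps_Suc_weight_mult_one_minus_X_power[OF assms])
  also have "\<dots> = Abs_fps (\<lambda>t. of_nat t * p t
                     + (if t = 0 then 0 else (of_nat m + 2 - of_nat t) * p (t - 1)))"
    by (rule fps_ext) (simp add: fps_mult_one_minus_X_nth algebra_simps)
  finally show ?thesis .
qed

section \<open>Mixed Eulerian numbers\<close>

text \<open>The coefficients of \<open>(1 - x)\<^sup>r\<^sup>+\<^sup>i\<^sup>+\<^sup>1 \<Sum>\<^sub>k k\<^sup>i (k + 1)\<^sup>r x\<^sup>k\<close> (see \<open>fps_mixed_eulerian\<close>);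
  for \<open>i = 0\<close> these are the Eulerian numbers.\<close>
fun mixed_eulerian :: "nat \<Rightarrow> nat \<Rightarrow> nat \<Rightarrow> rat" where
  "mixed_eulerian 0 0 t = (if t = 0 then 1 else 0)"
| "mixed_eulerian (Suc r) 0 t = of_nat (t + 1) * mixed_eulerian r 0 t
     + (if t = 0 then 0 else (of_nat r + 1 - of_nat t) * mixed_eulerian r 0 (t - 1))"
| "mixed_eulerian r (Suc i) t = of_nat t * mixed_eulerian r i t
     + (if t = 0 then 0 else (of_nat (r + i) + 2 - of_nat t) * mixed_eulerian r i (t - 1))"

lemma fps_mixed_eulerian:
  "Abs_fps (\<lambda>k. of_nat k ^ i * (of_nat k + 1) ^ r) * (1 - fps_X) ^ (r + i + 1)
     = Abs_fps (mixed_eulerian r i)"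
proof (induction i)
  case 0
  show ?case
  proof (induction r)
    case 0
    show ?case
      by (rule fps_ext) (simp add: fps_mult_one_minus_X_nth)
  next
    case (Suc r)
    have "Abs_fps (\<lambda>k. (of_nat k + 1 :: rat) ^ Suc r)
        = Abs_fps (\<lambda>k. of_nat (k + 1) * Abs_fps (\<lambda>k. (of_nat k + 1 :: rat) ^ r) $ k)"
      by (rule fps_ext) (simp add: algebra_simps)
    also have "\<dots> * (1 - fps_X) ^ (r + 2) = Abs_fps (mixed_eulerian (Suc r) 0)"
      using Suc by (subst fps_Suc_weight_mult_one_minus_X_power) (auto intro: fps_ext)
    finally show ?case
      by simp
  qed
next
  case (Suc i)
  have "Abs_fps (\<lambda>k. (of_nat k :: rat) ^ Suc i * (of_nat k + 1) ^ r)
      = Abs_fps (\<lambda>k. of_nat k * Abs_fps (\<lambda>k. (of_nat k :: rat) ^ i * (of_nat k + 1) ^ r) $ k)"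
    by (rule fps_ext) (simp add: algebra_simps)
  also have "\<dots> * (1 - fps_X) ^ ((r + i) + 2) = Abs_fps (mixed_eulerian r (Suc i))"
    using Suc by (subst fps_weight_mult_one_minus_X_power) (auto simp: add.assoc intro: fps_ext)
  finally show ?case
    by (simp add: add.assoc)
qed

lemma mixed_eulerian_eq_0: "r + i < t \<Longrightarrow> mixed_eulerian r i t = 0"
  by (induction r i t rule: mixed_eulerian.induct) simp_all

lemma mixed_eulerian_nonneg: "mixed_eulerian r i t \<ge> 0"
proof (induction r i t rule: mixed_eulerian.induct)
  case (2 r t)
  then show ?case
    using mixed_eulerian_eq_0[of r 0 "t - 1"]
    by (cases "t \<le> r + 1") (auto intro!: add_nonneg_nonneg mult_nonneg_nonneg simp del: of_nat_Suc)
next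
  case (3 r i t)
  then show ?case
    using mixed_eulerian_eq_0[of r i "t - 1"]
    by (cases "t \<le> r + i + 2") (auto intro!: add_nonneg_nonneg mult_nonneg_nonneg simp del: of_nat_Suc)
qed simp

lemma sum_atMost_Suc_shift_recurrence:
  fixes p a b :: "nat \<Rightarrow> 'a::comm_semiring_1"
  assumes "p (Suc m) = 0"
  shows "(\<Sum>t\<le>Suc m. a t * p t + (if t = 0 then 0 else b t * p (t - 1)))
       = (\<Sum>t\<le>m. (a t + b (Suc t)) * p t)"
proof -
  have "(\<Sum>t\<le>Suc m. if t = 0 then 0 else b t * p (t - 1)) = (\<Sum>t\<le>m. b (Suc t) * p t)"
    by (subst sum.atMost_Suc_shift) simp
  then show ?thesis
    using assms by (simp add: sum.distrib distrib_right)
qed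

lemma sum_mixed_eulerian: "(\<Sum>t\<le>r + i. mixed_eulerian r i t) = fact (r + i)"
proof (induction i)
  case 0
  show ?case
  proof (induction r)
    case (Suc r)
    have "(\<Sum>t\<le>Suc r. mixed_eulerian (Suc r) 0 t)
        = (\<Sum>t\<le>r. (of_nat (t + 1) + (of_nat r + 1 - of_nat (Suc t))) * mixed_eulerian r 0 t)"
      unfolding mixed_eulerian.simps
      by (rule sum_atMost_Suc_shift_recurrence) (simp add: mixed_eulerian_eq_0)
    also have "\<dots> = of_nat (Suc r) * (\<Sum>t\<le>r. mixed_eulerian r 0 t)"
      by (simp add: sum_distrib_left)
    finally show ?case
      using Suc by simp
  qed simp
next
  case (Suc i)
  have "(\<Sum>t\<le>Suc (r + i). mixed_eulerian r (Suc i) t)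
      = (\<Sum>t\<le>r + i. (of_nat t + (of_nat (r + i) + 2 - of_nat (Suc t))) * mixed_eulerian r i t)"
    unfolding mixed_eulerian.simps
    by (rule sum_atMost_Suc_shift_recurrence) (simp add: mixed_eulerian_eq_0)
  also have "\<dots> = of_nat (Suc (r + i)) * (\<Sum>t\<le>r + i. mixed_eulerian r i t)"
    by (simp add: sum_distrib_left)
  finally show ?case
    using Suc by simp
qed

lemma mixed_eulerian_pos_0: "t < r \<Longrightarrow> mixed_eulerian r 0 t > 0"
proof (induction r arbitrary: t)
  case (Suc r)
  show ?case
  proof (cases "t < r")
    case True
    then have "of_nat (t + 1) * mixed_eulerian r 0 t > 0"
      using Suc.IH by simp
    moreover have "(if t = 0 then 0 else (of_nat r + 1 - of_nat t) * mixed_eulerian r 0 (t - 1)) \<ge> 0"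
      using True mixed_eulerian_nonneg by (auto intro!: mult_nonneg_nonneg)
    ultimately show ?thesis
      by simp
  next
    case False
    with Suc.prems have "t = r"
      by simp
    moreover have "0 < r \<Longrightarrow> mixed_eulerian r 0 (r - 1) > 0"
      using Suc.IH by simp
    moreover have "of_nat (t + 1) * mixed_eulerian r 0 t \<ge> 0"
      using mixed_eulerian_nonneg by simp
    ultimately show ?thesis
      by (cases r) simp_all
  qed
qed simp

lemma mixed_eulerian_pos:
  assumes "0 < r" "0 < i" "0 < t" "t < r + i"
  shows "mixed_eulerian r i t > 0"
  using assms
proof (induction i arbitrary: t)
  case (Suc i)
  have recursion: "mixed_eulerian r (Suc i) t
      = of_nat t * mixed_eulerian r i t + (of_nat (r + i) + 2 - of_nat t) * mixed_eulerian r i (t - 1)"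
    using Suc.prems by simp
  have "(of_nat (r + i) + 2 - of_nat t :: rat) > 0"
    using Suc.prems by simp
  moreover consider "i = 0" | "0 < i" "t = r + i" | "0 < i" "t < r + i"
    using Suc.prems by linarith
  then have "mixed_eulerian r i (t - 1) > 0 \<or> mixed_eulerian r i t > 0"
    by cases (use Suc mixed_eulerian_pos_0[of "t - 1" r] in auto)
  ultimately show ?case
    unfolding recursion using Suc.prems mixed_eulerian_nonneg[of r i]
    by (auto intro: add_nonneg_pos add_pos_nonneg)
qed simp

lemma mixed_eulerian_at_0: "mixed_eulerian r i 0 = (if i = 0 then 1 else 0)"
  by (induction r i "0::nat" rule: mixed_eulerian.induct) simp_all

lemma mixed_eulerian_at_top: "0 < r \<Longrightarrow> mixed_eulerian r i (r + i) = 0"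
proof (induction i)
  case 0
  then show ?case
    by (cases r) (simp_all add: mixed_eulerian_eq_0)
qed (simp add: mixed_eulerian_eq_0)

lemma mixed_eulerian_0_diag: "mixed_eulerian 0 i i = 1"
  by (induction i) (simp_all add: mixed_eulerian_eq_0)

section \<open>\<open>H\<close> as an eigenvector\<close>

lemma fps_Hcoeff:
  "Abs_fps (Hcoeff N) = (\<Sum>a\<le>Suc N. fps_const (Fcoeff N a) * fps_X ^ a * (1 - fps_X) ^ (Suc N - a))"
proof -
  define p where "p = (\<Sum>t\<le>Suc N. monom (Hcoeff N t) t)"
  define q where "q = (\<Sum>a\<le>Suc N. smult (Fcoeff N a) ([:0, 1:] ^ a * (1 - [:0, 1:]) ^ (Suc N - a)))"
  have "p = q"
  proof (rule poly_ext)
    fix x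
    show "poly p x = poly q x"
      using Hcoeff_Fcoeff_homogeneous[of N x 1]
      by (simp add: p_def q_def poly_sum poly_monom mult_ac)
  qed
  have "Abs_fps (Hcoeff N) = fps_of_poly p"
    by (rule fps_ext) (auto simp: p_def coeff_sum Hcoeff_def)
  also have "\<dots> = (\<Sum>a\<le>Suc N. fps_const (Fcoeff N a) * fps_X ^ a * (1 - fps_X) ^ (Suc N - a))"
    unfolding \<open>p = q\<close> q_def
    by (simp only: fps_of_poly_sum fps_of_poly_smult fps_of_poly_mult fps_of_poly_power
        fps_of_poly_diff fps_of_poly_fps_X fps_of_poly_1 mult.assoc)
  finally show ?thesis .
qed

definition Fpower_sum :: "nat \<Rightarrow> nat \<Rightarrow> rat" where
  "Fpower_sum N k = (\<Sum>b\<le>Suc N. Fcoeff N b * of_nat k ^ b)"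

lemma fps_Fpower_sum_mult_power_eq_Hcoeff:
  assumes "1 \<le> N"
  shows "Abs_fps (Fpower_sum N) * (1 - fps_X) ^ (Suc N + 1) = fps_const (fact (Suc N)) * Abs_fps (Hcoeff N)"
proof -
  let ?n = "Suc N"
  have expand: "Abs_fps (Fpower_sum N)
      = (\<Sum>a\<le>?n. fps_const (fact ?n * Fcoeff N a) * Abs_fps (\<lambda>k. of_nat (k choose a)))"
  proof (rule fps_ext)
    fix k
    have "Abs_fps (Fpower_sum N) $ k = (\<Sum>a\<le>?n. fact ?n * Fcoeff N a * of_nat (k choose a))"
      unfolding fps_nth_Abs_fps Fpower_sum_def sum_Fcoeff_power[OF assms]
      by (simp only: sum_distrib_left mult.assoc)
    then show "Abs_fps (Fpower_sum N) $ k
      = (\<Sum>a\<le>?n. fps_const (fact ?n * Fcoeff N a) * Abs_fps (\<lambda>k. of_nat (k choose a))) $ k"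
      by (simp add: fps_sum_nth)
  qed
  have summand: "fps_const (fact ?n * Fcoeff N a) * Abs_fps (\<lambda>k. of_nat (k choose a)) * (1 - fps_X) ^ (?n + 1)
               = fps_const (fact ?n) * (fps_const (Fcoeff N a) * fps_X ^ a * (1 - fps_X) ^ (?n - a))"
    if "a \<le> ?n" for a
  proof -
    from that have "(1 - fps_X :: rat fps) ^ (?n + 1) = (1 - fps_X) ^ (a + 1) * (1 - fps_X) ^ (?n - a)"
      by (simp add: power_add[symmetric])
    then have "fps_const (fact ?n * Fcoeff N a) * Abs_fps (\<lambda>k. of_nat (k choose a)) * (1 - fps_X) ^ (?n + 1)
      = fps_const (fact ?n * Fcoeff N a)
          * (Abs_fps (\<lambda>k. of_nat (k choose a)) * (1 - fps_X) ^ (a + 1)) * (1 - fps_X) ^ (?n - a)"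
      by (simp only: mult.assoc)
    also have "\<dots> = fps_const (fact ?n) * (fps_const (Fcoeff N a) * fps_X ^ a * (1 - fps_X) ^ (?n - a))"
      unfolding fps_choose_mult_one_minus_X_power by (simp add: mult_ac)
    finally show ?thesis .
  qed
  have "Abs_fps (Fpower_sum N) * (1 - fps_X) ^ (?n + 1)
      = (\<Sum>a\<le>?n. fps_const (fact ?n * Fcoeff N a) * Abs_fps (\<lambda>k. of_nat (k choose a))
                      * (1 - fps_X) ^ (?n + 1))"
    unfolding expand by (rule sum_distrib_right)
  also have "\<dots> = (\<Sum>a\<le>?n. fps_const (fact ?n) * (fps_const (Fcoeff N a) * fps_X ^ a * (1 - fps_X) ^ (?n - a)))"
    by (rule sum.cong[OF refl], rule summand) simp
  also have "\<dots> = fps_const (fact ?n) * Abs_fps (Hcoeff N)"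
    unfolding fps_Hcoeff by (rule sum_distrib_left[symmetric])
  finally show ?thesis .
qed

lemma fps_Fpower_sum_mult_power_eq_mixed_eulerian:
  "Abs_fps (Fpower_sum N) * (1 - fps_X) ^ (Suc N + 1)
     = (\<Sum>j\<le>Suc N. fps_const (Hcoeff N j) * Abs_fps (mixed_eulerian (Suc N - j) j))"
proof -
  let ?n = "Suc N"
  have "Abs_fps (Fpower_sum N)
      = (\<Sum>j\<le>?n. fps_const (Hcoeff N j) * Abs_fps (\<lambda>k. of_nat k ^ j * (of_nat k + 1) ^ (?n - j)))"
    using Hcoeff_Fcoeff_homogeneous[of N "of_nat _" "of_nat _ + 1"]
    by (intro fps_ext) (simp add: Fpower_sum_def fps_sum_nth mult.assoc)
  then have "Abs_fps (Fpower_sum N) * (1 - fps_X) ^ (?n + 1)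
      = (\<Sum>j\<le>?n. fps_const (Hcoeff N j)
           * (Abs_fps (\<lambda>k. of_nat k ^ j * (of_nat k + 1) ^ (?n - j)) * (1 - fps_X) ^ (?n + 1)))"
    by (simp only: sum_distrib_right mult.assoc)
  also have "\<dots> = (\<Sum>j\<le>?n. fps_const (Hcoeff N j) * Abs_fps (mixed_eulerian (?n - j) j))"
  proof (intro sum.cong refl)
    fix j assume "j \<in> {..?n}"
    then have "?n + 1 = (?n - j) + j + 1"
      by simp
    then show "fps_const (Hcoeff N j)
           * (Abs_fps (\<lambda>k. of_nat k ^ j * (of_nat k + 1) ^ (?n - j)) * (1 - fps_X) ^ (?n + 1))
        = fps_const (Hcoeff N j) * Abs_fps (mixed_eulerian (?n - j) j)"
      by (simp only: fps_mixed_eulerian)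
  qed
  finally show ?thesis .
qed

lemma fact_mult_Hcoeff_eq:
  assumes "1 \<le> N"
  shows "fact (Suc N) * Hcoeff N t = (\<Sum>j\<le>Suc N. mixed_eulerian (Suc N - j) j t * Hcoeff N j)"
  using arg_cong[OF trans[OF fps_Fpower_sum_mult_power_eq_Hcoeff[OF assms, symmetric]
        fps_Fpower_sum_mult_power_eq_mixed_eulerian], of "\<lambda>f. f $ t"]
  by (simp add: fps_sum_nth mult.commute)

section \<open>Positive eigenvectors\<close>

lemma positive_part_subeigenvector:
  fixes B :: "'i \<Rightarrow> 'i \<Rightarrow> 'a::linordered_field"
  assumes "L * h t = (\<Sum>j\<in>I. B t j * h j)"
    and "\<And>j. j \<in> I \<Longrightarrow> B t j \<ge> 0"
  shows "L * max (h t) 0 \<le> (\<Sum>j\<in>I. B t j * max (h j) 0)"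
proof (cases "h t > 0")
  case True
  then have "L * max (h t) 0 = (\<Sum>j\<in>I. B t j * h j)"
    using assms(1) by simp
  also have "\<dots> \<le> (\<Sum>j\<in>I. B t j * max (h j) 0)"
    using assms(2) by (intro sum_mono mult_left_mono) auto
  finally show ?thesis .
next
  case False
  then show ?thesis
    using assms(2) by (simp add: sum_nonneg)
qed

lemma subeigenvector_eq:
  fixes B :: "'i \<Rightarrow> 'i \<Rightarrow> 'a::linordered_field"
  assumes "finite I"
    and sub: "\<And>t. t \<in> I \<Longrightarrow> L * v t \<le> (\<Sum>j\<in>I. B t j * v j)"
    and col: "\<And>j. j \<in> I \<Longrightarrow> (\<Sum>t\<in>I. B t j) \<le> L"
    and nonneg: "\<And>j. j \<in> I \<Longrightarrow> v j \<ge> 0"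
    and "t \<in> I"
  shows "L * v t = (\<Sum>j\<in>I. B t j * v j)"
proof -
  let ?gap = "\<lambda>t. (\<Sum>j\<in>I. B t j * v j) - L * v t"
  have "(\<Sum>t\<in>I. \<Sum>j\<in>I. B t j * v j) = (\<Sum>j\<in>I. (\<Sum>t\<in>I. B t j) * v j)"
    by (subst sum.swap) (simp add: sum_distrib_right)
  also have "\<dots> \<le> (\<Sum>j\<in>I. L * v j)"
    using col nonneg by (intro sum_mono mult_right_mono) auto
  finally have "(\<Sum>t\<in>I. ?gap t) \<le> 0"
    by (simp add: sum_subtractf sum_distrib_left)
  moreover have "\<forall>t\<in>I. ?gap t \<ge> 0"
    using sub by simp
  ultimately have "\<forall>t\<in>I. ?gap t = 0"
    using sum_nonneg_eq_0_iff[OF \<open>finite I\<close>, of ?gap] sum_nonneg[of I ?gap] by simp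
  then show ?thesis
    using \<open>t \<in> I\<close> by simp
qed

lemma eigenvector_of_positive_matrix_pos:
  fixes B :: "'i \<Rightarrow> 'i \<Rightarrow> 'a::linordered_field"
  assumes "finite I"
    and eig: "\<And>t. t \<in> I \<Longrightarrow> L * h t = (\<Sum>j\<in>I. B t j * h j)"
    and pos: "\<And>t j. t \<in> I \<Longrightarrow> j \<in> I \<Longrightarrow> B t j > 0"
    and col: "\<And>j. j \<in> I \<Longrightarrow> (\<Sum>t\<in>I. B t j) \<le> L"
    and "(\<Sum>t\<in>I. h t) > 0"
    and "t \<in> I"
  shows "h t > 0"
proof -
  define v where "v t = max (h t) 0" for t
  have v_nonneg: "v k \<ge> 0" for k
    by (simp add: v_def)
  have v_sub: "L * v t \<le> (\<Sum>j\<in>I. B t j * v j)" if "t \<in> I" for t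
    unfolding v_def using that
    by (intro positive_part_subeigenvector[OF eig]) (auto intro: less_imp_le pos)
  have v_eig: "L * v t = (\<Sum>j\<in>I. B t j * v j)" if "t \<in> I" for t
    by (rule subeigenvector_eq[where v = v]) (use \<open>finite I\<close> that v_sub col v_nonneg in auto)
  have "(\<Sum>t\<in>I. h t) \<le> (\<Sum>t\<in>I. v t)"
    by (rule sum_mono) (simp add: v_def)
  with \<open>(\<Sum>t\<in>I. h t) > 0\<close> obtain j where j: "j \<in> I" "v j > 0"
    by (metis leD less_le_trans sum_nonpos not_le_imp_less)
  have "0 < B t j * v j"
    using pos[OF \<open>t \<in> I\<close> j(1)] j(2) by simp
  also have "\<dots> \<le> (\<Sum>k\<in>I. B t k * v k)"
    using \<open>finite I\<close> j(1) pos[OF \<open>t \<in> I\<close>] v_nonneg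
    by (intro member_le_sum) (auto intro: mult_nonneg_nonneg less_imp_le)
  also have "\<dots> = L * v t"
    using v_eig[OF \<open>t \<in> I\<close>] by simp
  finally have "L * v t > 0" .
  moreover have "B t j \<le> (\<Sum>k\<in>I. B k j)"
    using \<open>finite I\<close> \<open>t \<in> I\<close> pos[OF _ j(1)] by (intro member_le_sum) (auto intro: less_imp_le)
  then have "0 < L"
    using pos[OF \<open>t \<in> I\<close> j(1)] col[OF j(1)] by linarith
  ultimately have "v t > 0"
    by (simp add: zero_less_mult_iff)
  then show ?thesis
    by (simp add: v_def)
qed

lemma Hcoeff_eq_0_if_unit_row:
  assumes "1 \<le> N" "\<And>j. j \<le> Suc N \<Longrightarrow> mixed_eulerian (Suc N - j) j t = (if j = t then 1 else 0)"
  shows "Hcoeff N t = 0"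
proof -
  have "fact (Suc N) * Hcoeff N t = (\<Sum>j\<le>Suc N. (if j = t then 1 else 0) * Hcoeff N j)"
    unfolding fact_mult_Hcoeff_eq[OF assms(1)] using assms(2) by (intro sum.cong) auto
  also have "\<dots> = (\<Sum>j\<le>Suc N. if j = t then Hcoeff N j else 0)"
    by (intro sum.cong) auto
  also have "\<dots> = Hcoeff N t"
    by (simp add: Hcoeff_def)
  finally have "(fact (Suc N) - 1) * Hcoeff N t = 0"
    by (simp add: algebra_simps)
  moreover have "(1 :: rat) < fact (Suc N)"
    using fact_less_mono[of 1 "Suc N"] assms(1) by simp
  ultimately show ?thesis
    by simp
qed

lemma Hcoeff_0: "1 \<le> N \<Longrightarrow> Hcoeff N 0 = 0"
  by (rule Hcoeff_eq_0_if_unit_row) (assumption, rule mixed_eulerian_at_0)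

lemma Hcoeff_Suc_self:
  assumes "1 \<le> N"
  shows "Hcoeff N (Suc N) = 0"
proof (rule Hcoeff_eq_0_if_unit_row[OF assms])
  fix j assume "j \<le> Suc N"
  then show "mixed_eulerian (Suc N - j) j (Suc N) = (if j = Suc N then 1 else 0)"
    using mixed_eulerian_0_diag[of j] mixed_eulerian_at_top[of "Suc N - j" j] by auto
qed

lemma sum_Hcoeff: "(\<Sum>t\<le>Suc N. Hcoeff N t) = 1"
proof -
  have "(\<Sum>t\<le>Suc N. Hcoeff N t) = (\<Sum>a\<le>Suc N. Fcoeff N a * 0 ^ (Suc N - a))"
    using Hcoeff_Fcoeff_homogeneous[of N 1 1] by simp
  also have "\<dots> = (\<Sum>a\<le>Suc N. if a = Suc N then Fcoeff N a else 0)"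
    by (intro sum.cong) auto
  also have "\<dots> = Fcoeff N (Suc N)"
    by simp
  finally show ?thesis
    by simp
qed

lemma Hcoeff_pos:
  assumes "1 \<le> t" "t \<le> N"
  shows "Hcoeff N t > 0"
proof (rule eigenvector_of_positive_matrix_pos
    [where B = "\<lambda>s j. mixed_eulerian (Suc N - j) j s" and L = "fact (Suc N)"])
  have "1 \<le> N"
    using assms by simp
  have outside: "Hcoeff N j = 0" if "j \<in> {..Suc N} - {1..N}" for j
  proof -
    from that have "j = 0 \<or> j = Suc N"
      by auto
    then show ?thesis
      using Hcoeff_0[OF \<open>1 \<le> N\<close>] Hcoeff_Suc_self[OF \<open>1 \<le> N\<close>] by auto
  qed
  show "fact (Suc N) * Hcoeff N s = (\<Sum>j\<in>{1..N}. mixed_eulerian (Suc N - j) j s * Hcoeff N j)"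
    if "s \<in> {1..N}" for s
    unfolding fact_mult_Hcoeff_eq[OF \<open>1 \<le> N\<close>]
    by (rule sum.mono_neutral_right) (use outside in auto)
  show "mixed_eulerian (Suc N - j) j s > 0" if "s \<in> {1..N}" "j \<in> {1..N}" for s j
    using that by (intro mixed_eulerian_pos) auto
  show "(\<Sum>s\<in>{1..N}. mixed_eulerian (Suc N - j) j s) \<le> fact (Suc N)" if "j \<in> {1..N}" for j
  proof -
    have "(\<Sum>s\<in>{1..N}. mixed_eulerian (Suc N - j) j s) \<le> (\<Sum>s\<le>(Suc N - j) + j. mixed_eulerian (Suc N - j) j s)"
      using that by (intro sum_mono2) (auto simp: mixed_eulerian_nonneg)
    also have "\<dots> = fact (Suc N)"
      using that sum_mixed_eulerian[of "Suc N - j" j] by simp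
    finally show ?thesis .
  qed
  have "(\<Sum>s\<in>{1..N}. Hcoeff N s) = (\<Sum>s\<le>Suc N. Hcoeff N s)"
    by (rule sum.mono_neutral_left) (use outside in auto)
  then show "(\<Sum>s\<in>{1..N}. Hcoeff N s) > 0"
    using sum_Hcoeff[of N] by simp
qed (use assms in auto)

theorem lemma2p12:
  fixes d i :: int
  assumes "d \<ge> 1" and "1 \<le> i" and "i \<le> d"
  shows "Hnum i d > 0"
proof -
  have "Hcoeff (nat d) (nat i) > 0"
    using assms by (intro Hcoeff_pos) auto
  moreover have "int (nat i) = i" "int (nat d) = d" "nat i \<le> Suc (nat d)"
    using assms by simp_all
  ultimately show ?thesis
    by (simp add: Hcoeff_def)
qed

end
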